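(* For every positive integer $n$, $w_n(x)=s_n(x)$ as polynomials, where $$w_n(x)=\sum_{k=1}^n w(n,k)x^{k-1},\qquad s_n(x)=\sum_{k=1}^nN(n,k)x^{k-1}(x+1)^{n-k}.$$
   Context: For $n\ge k\ge1$, $N(n,k)=\frac1n\binom{n}{k}\binom{n}{k-1}$ (Narayana number) and $w(n,k)=\frac1k\binom{n-1}{k-1}\binom{n+k}{k-1}$. *)

theory Defs
  imports "HOL-Computational_Algebra.Polynomial"
begin

definition narayana :: "nat \<Rightarrow> nat \<Rightarrow> rat" where
  "narayana n k = (1 / of_nat n) * of_nat (n choose k) * of_nat (n choose (k - 1))"

definition wcoef :: "nat \<Rightarrow> nat \<Rightarrow> rat" where
  "wcoef n k = (1 / of_nat k) * of_nat ((n - 1) choose (k - 1)) * of_nat ((n + k) choose (k - 1))"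

definition w_poly :: "nat \<Rightarrow> rat poly" where
  "w_poly n = (\<Sum>k=1..n. monom (wcoef n k) (k - 1))"

definition s_poly :: "nat \<Rightarrow> rat poly" where
  "s_poly n = (\<Sum>k=1..n. smult (narayana n k) ([:0, 1:] ^ (k - 1) * [:1, 1:] ^ (n - k)))"

end

theory Submission
  imports Defs
begin

text \<open>The coefficient of \<open>x^(j-1)\<close> in \<open>s\<^sub>n\<close> is
  \<open>\<Sum>\<^sub>k N(n,k) C(n-k,j-k)\<close>; the trinomial revision \<open>C(n,k) C(n-k,j-k) = C(n,j) C(j,k)\<close>
  pulls out \<open>C(n,j)\<close>, and what remains, \<open>\<Sum>\<^sub>k C(j,k) C(n,k-1)\<close>, is the Vandermonde
  convolution \<open>C(n+j,j-1)\<close>. Finally \<open>n C(n-1,j-1) = j C(n,j)\<close> matches this with \<open>w(n,j)\<close>.\<close>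

lemma coeff_one_plus_x_power:
  "coeff ([:1, 1:] ^ m) l = (of_nat (m choose l) :: 'a :: comm_semiring_1)"
proof (cases "l \<le> m")
  case True
  then show ?thesis by (simp add: coeff_linear_poly_power)
next
  case False
  have "degree ([:1, 1::'a:] ^ m) \<le> m"
    by (rule order.trans[OF degree_power_le]) simp
  then show ?thesis using False by (simp add: coeff_eq_0 binomial_eq_0)
qed

lemma coeff_w_poly: "coeff (w_poly n) i = (if i < n then wcoef n (Suc i) else 0)"
proof -
  have "coeff (w_poly n) i = (\<Sum>k=1..n. if k = Suc i then wcoef n k else 0)"
    unfolding w_poly_def coeff_sum coeff_monom by (intro sum.cong) auto
  then show ?thesis by simp
qed

lemma coeff_s_poly:
  "coeff (s_poly n) i =
     (\<Sum>k=1..min n (Suc i). narayana n k * of_nat ((n - k) choose (Suc i - k)))"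
proof -
  have "coeff (s_poly n) i =
      (\<Sum>k=1..n. if k \<le> Suc i then narayana n k * of_nat ((n - k) choose (Suc i - k)) else 0)"
    unfolding s_poly_def coeff_sum coeff_smult
    by (intro sum.cong refl)
      (auto simp: monom_altdef[of 1, simplified, symmetric] coeff_monom_mult
        coeff_one_plus_x_power Suc_diff_le)
  also have "\<dots> = (\<Sum>k=1..min n (Suc i). narayana n k * of_nat ((n - k) choose (Suc i - k)))"
    by (rule sum.mono_neutral_cong_right) auto
  finally show ?thesis .
qed

lemma sum_choose_mult_choose_pred:
  "(\<Sum>k=1..Suc m. (Suc m choose k) * (n choose (k - 1))) = (n + Suc m) choose m"
proof -
  have "(\<Sum>k=1..Suc m. (Suc m choose k) * (n choose (k - 1)))
      = (\<Sum>l\<le>m. (n choose l) * (Suc m choose (m - l)))"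
  proof -
    have "(\<Sum>k=1..Suc m. (Suc m choose k) * (n choose (k - 1)))
        = (\<Sum>l=0..m. (Suc m choose Suc l) * (n choose l))"
      using sum.shift_bounds_cl_Suc_ivl[of "\<lambda>k. (Suc m choose k) * (n choose (k - 1))" 0 m]
      by simp
    also have "\<dots> = (\<Sum>l\<le>m. (n choose l) * (Suc m choose (m - l)))"
      unfolding atLeast0AtMost
    proof (intro sum.cong refl)
      fix l assume "l \<in> {..m}"
      then have "Suc m choose Suc l = Suc m choose (m - l)"
        using binomial_symmetric[of "Suc l" "Suc m"] by simp
      then show "(Suc m choose Suc l) * (n choose l) = (n choose l) * (Suc m choose (m - l))"
        by simp
    qed
    finally show ?thesis .
  qed
  also have "\<dots> = (n + Suc m) choose m"
    by (rule vandermonde)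
  finally show ?thesis .
qed

lemma sum_narayana_numerator_convolution:
  assumes "1 \<le> j" "j \<le> n"
  shows "(\<Sum>k=1..j. (n choose k) * (n choose (k - 1)) * ((n - k) choose (j - k)))
         = (n choose j) * ((n + j) choose (j - 1))"
proof -
  obtain m where Suc: "j = Suc m"
    using assms(1) by (cases j) auto
  have "(\<Sum>k=1..j. (n choose k) * (n choose (k - 1)) * ((n - k) choose (j - k)))
      = (\<Sum>k=1..j. (n choose j) * ((j choose k) * (n choose (k - 1))))"
    using assms by (intro sum.cong refl) (simp add: choose_mult[symmetric])
  also have "\<dots> = (n choose j) * ((n + j) choose (j - 1))"
    unfolding sum_distrib_left[symmetric] Suc
    by (simp only: sum_choose_mult_choose_pred add_Suc_right diff_Suc_1)
  finally show ?thesis .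
qed

lemma of_nat_mult_wcoef:
  assumes "1 \<le> j"
  shows "of_nat n * wcoef n j = of_nat ((n choose j) * ((n + j) choose (j - 1)))"
proof -
  have "n * ((n - 1) choose (j - 1)) = (n choose j) * j"
    using Suc_times_binomial_eq[of "n - 1" "j - 1"] assms by (cases n) simp_all
  then have "(of_nat n :: rat) * of_nat ((n - 1) choose (j - 1)) = of_nat (n choose j) * of_nat j"
    by (metis of_nat_mult)
  then show ?thesis
    using assms unfolding wcoef_def by (simp add: field_simps)
qed

theorem lemma4p5:
  fixes n :: nat
  assumes "n \<ge> 1"
  shows "w_poly n = s_poly n"
proof (rule poly_eqI)
  fix i
  show "coeff (w_poly n) i = coeff (s_poly n) i"
  proof (cases "i < n")
    case False
    have "coeff (s_poly n) i = 0"
      unfolding coeff_s_poly using False by (intro sum.neutral ballI) (auto simp: binomial_eq_0)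
    then show ?thesis
      using False by (simp add: coeff_w_poly)
  next
    case True
    have "coeff (s_poly n) i
        = (\<Sum>k=1..Suc i. (1 / of_nat n) * of_nat ((n choose k) * (n choose (k - 1))
                                               * ((n - k) choose (Suc i - k))))"
      using True by (simp add: coeff_s_poly narayana_def)
    also have "\<dots> = (1 / of_nat n) * of_nat (\<Sum>k=1..Suc i. (n choose k) * (n choose (k - 1))
                                               * ((n - k) choose (Suc i - k)))"
      by (simp only: of_nat_sum sum_distrib_left)
    also have "\<dots> = (1 / of_nat n) * of_nat ((n choose Suc i) * ((n + Suc i) choose i))"
      using sum_narayana_numerator_convolution[of "Suc i" n] True by simp
    also have "\<dots> = wcoef n (Suc i)"
      using of_nat_mult_wcoef[of "Suc i" n] assms by (simp add: field_simps)
    finally show ?thesis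
      using True by (simp add: coeff_w_poly)
  qed
qed

end
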